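(* Let $X$ be a smooth Minkowski plane and $A\subset X$ finite. If $A$ is neither a double cluster nor a pseudo double cluster, then $\mathrm{FT}(A)\subseteq A\cup\operatorname{int}\operatorname{conv}A$.
   Context: A Minkowski plane is a two-dimensional real normed space $(X,\|\cdot\|)$ with unit ball $B$; it is smooth if every boundary point of $B$ has a unique supporting line. A proper exposed face of $B$ is the intersection of $B$ with a supporting line. For finite $A$, $\mathrm{FT}(A)$ is the set of minimizers of $\mathbf{x}\mapsto\sum_{\mathbf{a}\in A}\|\mathbf{x}-\mathbf{a}\|$ (Fermat-Torricelli points). A set $C=\{\mathbf{x}_1,\dots,\mathbf{x}_m,\mathbf{y}_1,\dots,\mathbf{y}_m\}$ is a double cluster with pairs $\mathbf{x}_i,\mathbf{y}_i$ if all $\frac{\mathbf{x}_i-\mathbf{y}_i}{\|\mathbf{x}_i-\mathbf{y}_i\|}$ lie in the same proper exposed face of $B$. A pseudo double cluster is the union of a double cluster $C$, a Fermat-Torricelli point of $C$ (its centre), and one further arbitrary point. $\operatorname{int}$ denotes interior. *)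

theory Defs
  imports "HOL-Analysis.Analysis"
begin

definition is_norm :: "(real^2 \<Rightarrow> real) \<Rightarrow> bool" where
  "is_norm N \<longleftrightarrow> (\<forall>x. N x = 0 \<longleftrightarrow> x = 0) \<and>
     (\<forall>c x. N (c *\<^sub>R x) = \<bar>c\<bar> * N x) \<and>
     (\<forall>x y. N (x + y) \<le> N x + N y)"

definition unit_ball :: "(real^2 \<Rightarrow> real) \<Rightarrow> (real^2) set" where
  "unit_ball N = {x. N x \<le> 1}"

definition supporting_line :: "(real^2 \<Rightarrow> real) \<Rightarrow> (real^2) set \<Rightarrow> bool" where
  "supporting_line N L \<longleftrightarrow> (\<exists>u c. u \<noteq> 0 \<and> L = {x. u \<bullet> x = c} \<and>
      (\<forall>x\<in>unit_ball N. u \<bullet> x \<le> c) \<and> (\<exists>x\<in>unit_ball N. u \<bullet> x = c))"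

definition smooth_plane :: "(real^2 \<Rightarrow> real) \<Rightarrow> bool" where
  "smooth_plane N \<longleftrightarrow> (\<forall>p\<in>frontier (unit_ball N). \<exists>!L. supporting_line N L \<and> p \<in> L)"

definition proper_exposed_face :: "(real^2 \<Rightarrow> real) \<Rightarrow> (real^2) set \<Rightarrow> bool" where
  "proper_exposed_face N F \<longleftrightarrow> (\<exists>L. supporting_line N L \<and> F = unit_ball N \<inter> L)"

definition FT :: "(real^2 \<Rightarrow> real) \<Rightarrow> (real^2) set \<Rightarrow> (real^2) set" where
  "FT N A = {x. \<forall>y. (\<Sum>a\<in>A. N (x - a)) \<le> (\<Sum>a\<in>A. N (y - a))}"

text \<open>Double cluster with pairs x i, y i (i < m): the 2m points are pairwise distinct.\<close>
definition double_cluster :: "(real^2 \<Rightarrow> real) \<Rightarrow> (real^2) set \<Rightarrow> bool" where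
  "double_cluster N C \<longleftrightarrow> (\<exists>m (x::nat \<Rightarrow> real^2) y F.
      C = x ` {..<m} \<union> y ` {..<m} \<and> card C = 2 * m \<and>
      proper_exposed_face N F \<and>
      (\<forall>i<m. (1 / N (x i - y i)) *\<^sub>R (x i - y i) \<in> F))"

definition pseudo_double_cluster :: "(real^2 \<Rightarrow> real) \<Rightarrow> (real^2) set \<Rightarrow> bool" where
  "pseudo_double_cluster N A \<longleftrightarrow> (\<exists>C c p. double_cluster N C \<and> c \<in> FT N C \<and>
      A = C \<union> {c, p})"

end

theory Submission
  imports Defs
begin

text \<open>Let \<open>z \<in> FT A\<close> with \<open>z \<notin> A\<close>. Smoothness makes the norm Gateaux differentiable away from
  \<open>0\<close>, its gradient at \<open>z - a\<close> being the unique norming functional \<open>U a\<close>, so minimality of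
  \<open>z\<close> forces \<open>\<Sum>a\<in>A. U a = 0\<close>. If moreover \<open>z\<close> is not interior to \<open>conv A\<close>, all
  \<open>z - a\<close> lie in a closed half-plane \<open>\<psi> \<bullet> x \<ge> 0\<close>. Norming functionals of such vectors lie on
  the arc of the dual unit sphere between \<open>\<phi>\<close> and \<open>- \<phi>\<close>, where \<open>\<phi>\<close> norms the boundary
  direction \<open>perp \<psi>\<close>; a vanishing sum forces every \<open>U a\<close> to be an endpoint \<open>\<plusminus>\<phi>\<close>, each sign
  occurring equally often. For \<open>U a = - \<phi>\<close> and \<open>U b = \<phi>\<close> the triangle inequality through
  \<open>z\<close> is an equality, so \<open>\<phi>\<close> norms \<open>a - b\<close>; pairing the two classes exhibits \<open>A\<close> as a
  double cluster in the face of the unit ball exposed by \<open>\<phi>\<close>.\<close>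

definition perp :: "real^2 \<Rightarrow> real^2" where
  "perp x = vector [- x$2, x$1]"

lemma vec2_eq_iff: "(x::real^2) = y \<longleftrightarrow> x$1 = y$1 \<and> x$2 = y$2"
  by (simp add: vec_eq_iff forall_2)

lemma inner_vec2: "(x::real^2) \<bullet> y = x$1 * y$1 + x$2 * y$2"
  by (simp add: inner_vec_def sum_2)

lemma perp_nth [simp]: "perp x $ 1 = - x$2" "perp x $ 2 = x$1"
  by (simp_all add: perp_def)

lemma perp_perp [simp]: "perp (perp x) = - x"
  by (simp add: vec2_eq_iff)

lemma perp_eq_0_iff [simp]: "perp x = 0 \<longleftrightarrow> x = 0"
  by (auto simp: vec2_eq_iff)

lemma inner_perp_self [simp]: "x \<bullet> perp x = 0" "perp x \<bullet> x = 0"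
  by (simp_all add: inner_vec2)

lemma inner_perp_perp [simp]: "perp x \<bullet> perp y = x \<bullet> y"
  by (simp add: inner_vec2)

lemma inner_perp_left: "perp x \<bullet> y = - (x \<bullet> perp y)"
  by (simp add: inner_vec2)

lemma cramer_perp: "(p \<bullet> perp d) *\<^sub>R x = (x \<bullet> perp d) *\<^sub>R p - (x \<bullet> perp p) *\<^sub>R d"
  by (simp add: vec2_eq_iff inner_vec2 algebra_simps)

lemma perp_orthogonal_imp_parallel:
  assumes "p \<bullet> perp d = 0"
  shows "(p \<bullet> p) *\<^sub>R d = (p \<bullet> d) *\<^sub>R p"
  using cramer_perp[of p d "perp p"] assms by simp

lemma hyperplane_eq_imp_eq:
  fixes u v :: "'a::real_inner"
  assumes eq: "{x. u \<bullet> x = 1} = {x. v \<bullet> x = 1}" and q: "u \<bullet> q = 1"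
  shows "u = v"
proof -
  have vq: "v \<bullet> q = 1" using eq q by blast
  have "u \<bullet> y = v \<bullet> y" for y
  proof (cases "u \<bullet> y = 0")
    case True
    then have "u \<bullet> (q + y) = 1" using q by (simp add: inner_add_right)
    then have "v \<bullet> (q + y) = 1" using eq by blast
    then show ?thesis using vq True by (simp add: inner_add_right)
  next
    case False
    then have "u \<bullet> ((1 / (u \<bullet> y)) *\<^sub>R y) = 1" by simp
    then have "v \<bullet> ((1 / (u \<bullet> y)) *\<^sub>R y) = 1" using eq by blast
    then show ?thesis using False by (simp add: field_simps)
  qed
  then have "(u - v) \<bullet> (u - v) = 0" by (simp add: inner_diff_left)
  then show ?thesis by simp
qed

lemma exists_halfspace_le_not_interior:
  fixes S :: "'a::euclidean_space set"
  assumes "convex S" and "z \<notin> interior S"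
  obtains \<psi> where "\<psi> \<noteq> 0" and "\<And>x. x \<in> S \<Longrightarrow> \<psi> \<bullet> x \<le> \<psi> \<bullet> z"
proof (cases "interior S = {}")
  case True
  then obtain a b where "a \<noteq> 0" and S: "S \<subseteq> {x. a \<bullet> x = b}"
    using empty_interior_subset_hyperplane[OF \<open>convex S\<close>] by blast
  show ?thesis
  proof (cases "b \<le> a \<bullet> z")
    case True
    then show ?thesis using \<open>a \<noteq> 0\<close> S by (intro that[of a]) auto
  next
    case False
    then show ?thesis using \<open>a \<noteq> 0\<close> S by (intro that[of "- a"]) auto
  qed
next
  case False
  have "interior S \<inter> {z} = {}" using assms(2) by blast
  then obtain a b where "a \<noteq> 0" and int: "\<forall>x\<in>interior S. a \<bullet> x \<le> b" and "b \<le> a \<bullet> z"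
    using separating_hyperplane_sets[OF convex_interior[OF \<open>convex S\<close>] convex_singleton False]
    by (metis insert_not_empty singletonI)
  have "closure (interior S) \<subseteq> {x. a \<bullet> x \<le> b}"
    using int by (intro closure_minimal) (auto simp: closed_halfspace_le)
  then have "S \<subseteq> {x. a \<bullet> x \<le> b}"
    using convex_closure_interior[OF \<open>convex S\<close> False] closure_subset by blast
  then show ?thesis using \<open>a \<noteq> 0\<close> \<open>b \<le> a \<bullet> z\<close> by (intro that[of a]) auto
qed

lemma double_cluster_of_pairing:
  assumes "finite P" "finite M" "P \<inter> M = {}" "card P = card M" "proper_exposed_face N F"
    and pair: "\<And>a b. a \<in> M \<Longrightarrow> b \<in> P \<Longrightarrow> (1 / N (a - b)) *\<^sub>R (a - b) \<in> F"
  shows "double_cluster N (M \<union> P)"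
proof -
  define m where "m = card M"
  obtain x where x: "bij_betw x {..<m} M"
    using ex_bij_betw_nat_finite[OF \<open>finite M\<close>] by (auto simp: m_def atLeast0LessThan)
  obtain y where y: "bij_betw y {..<m} P"
    using ex_bij_betw_nat_finite[OF \<open>finite P\<close>] assms(4) by (auto simp: m_def atLeast0LessThan)
  have "M \<union> P = x ` {..<m} \<union> y ` {..<m}" using x y by (simp add: bij_betw_def)
  moreover have "card (M \<union> P) = 2 * m"
    using card_Un_disjoint[OF assms(2,1)] assms(3,4) by (simp add: m_def Int_commute)
  moreover have "(1 / N (x i - y i)) *\<^sub>R (x i - y i) \<in> F" if "i < m" for i
    using pair bij_betwE[OF x] bij_betwE[OF y] that by blast
  ultimately show ?thesis
    unfolding double_cluster_def using assms(5) by blast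
qed

definition norming :: "(real^2 \<Rightarrow> real) \<Rightarrow> real^2 \<Rightarrow> real^2 \<Rightarrow> bool" where
  "norming N u p \<longleftrightarrow> (\<forall>x. u \<bullet> x \<le> N x) \<and> u \<bullet> p = N p"

locale minkowski_plane =
  fixes N :: "real^2 \<Rightarrow> real"
  assumes is_norm: "is_norm N"
begin

lemma N_eq_0_iff [simp]: "N x = 0 \<longleftrightarrow> x = 0"
  using is_norm by (simp add: is_norm_def)

lemma N_zero [simp]: "N 0 = 0"
  by simp

lemma N_scaleR: "N (c *\<^sub>R x) = \<bar>c\<bar> * N x"
  using is_norm by (simp add: is_norm_def)

lemma N_triangle: "N (x + y) \<le> N x + N y"
  using is_norm by (simp add: is_norm_def)

lemma N_minus [simp]: "N (- x) = N x"
  using N_scaleR[of "-1" x] by simp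

lemma N_commute: "N (x - y) = N (y - x)"
  using N_minus[of "x - y"] by simp

lemma N_nonneg: "0 \<le> N x"
  using N_triangle[of x "- x"] by simp

lemma N_pos: "x \<noteq> 0 \<Longrightarrow> 0 < N x"
  using N_nonneg[of x] by (simp add: order_less_le)

lemma N_convex_chord:
  assumes "0 < s" "s \<le> t" and "N (p + t *\<^sub>R d) \<le> N p + t * D"
  shows "N (p + s *\<^sub>R d) \<le> N p + s * D"
proof -
  define \<theta> where "\<theta> = s / t"
  have \<theta>: "0 < \<theta>" "\<theta> \<le> 1" "\<theta> * t = s" using assms(1,2) by (auto simp: \<theta>_def)
  have "p + s *\<^sub>R d = (1 - \<theta>) *\<^sub>R p + \<theta> *\<^sub>R (p + t *\<^sub>R d)"
    by (simp add: algebra_simps flip: \<theta>(3))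
  then have "N (p + s *\<^sub>R d) \<le> (1 - \<theta>) * N p + \<theta> * N (p + t *\<^sub>R d)"
    using N_triangle[of "(1 - \<theta>) *\<^sub>R p" "\<theta> *\<^sub>R (p + t *\<^sub>R d)"] \<theta> by (simp add: N_scaleR)
  also have "\<dots> \<le> (1 - \<theta>) * N p + \<theta> * (N p + t * D)"
    using assms(3) \<theta> by (simp add: mult_left_mono)
  also have "\<dots> = N p + s * D" by (simp add: algebra_simps flip: \<theta>(3))
  finally show ?thesis .
qed

lemma abs_inner_le_N: "(\<forall>x. u \<bullet> x \<le> N x) \<Longrightarrow> \<bar>u \<bullet> x\<bar> \<le> N x"
  using N_minus[of x] by (metis abs_le_iff inner_minus_right minus_le_iff)

lemma norming_abs_inner:
  assumes "\<forall>x. u \<bullet> x \<le> N x" and "N w \<le> \<bar>u \<bullet> w\<bar>"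
  shows "norming N u w \<or> norming N (- u) w"
  using assms abs_inner_le_N[OF assms(1), of w] abs_inner_le_N[OF assms(1)]
  unfolding norming_def by (smt (verit) inner_minus_left)

lemma norming_add:
  assumes "\<forall>x. u \<bullet> x \<le> N x" and "u \<bullet> x = N x" and "u \<bullet> y = N y"
  shows "u \<bullet> (x + y) = N (x + y)"
  using assms N_triangle[of x y] by (smt (verit) inner_add_right)

lemma N_normalize: "p \<noteq> 0 \<Longrightarrow> N ((1 / N p) *\<^sub>R p) = 1"
  using N_pos[of p] by (simp add: N_scaleR)

lemma norming_normalized:
  assumes "norming N u p" and "p \<noteq> 0"
  shows "(1 / N p) *\<^sub>R p \<in> unit_ball N \<inter> {x. u \<bullet> x = 1}"
  using assms N_normalize[of p] N_pos[of p] by (simp add: norming_def unit_ball_def)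

lemma norming_supporting_line:
  assumes "norming N u p" and "p \<noteq> 0"
  shows "supporting_line N {x. u \<bullet> x = 1}"
proof -
  have "u \<noteq> 0" using norming_normalized[OF assms] by auto
  moreover have "\<forall>x\<in>unit_ball N. u \<bullet> x \<le> 1"
    using assms(1) unfolding norming_def unit_ball_def by (auto intro: order_trans)
  ultimately show ?thesis
    using norming_normalized[OF assms] unfolding supporting_line_def by blast
qed

lemma norming_exposed_face:
  assumes "norming N u p" and "p \<noteq> 0"
  shows "proper_exposed_face N (unit_ball N \<inter> {x. u \<bullet> x = 1})"
  using norming_supporting_line[OF assms] unfolding proper_exposed_face_def by blast

lemma mem_frontier_unit_ball:
  assumes "N q = 1"
  shows "q \<in> frontier (unit_ball N)"
proof -
  have "q \<noteq> 0" using assms by auto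
  have "q \<notin> interior (unit_ball N)"
  proof
    assume "q \<in> interior (unit_ball N)"
    then obtain e where "e > 0" and ball: "ball q e \<subseteq> unit_ball N"
      using mem_interior by blast
    define t where "t = e / (2 * norm q)"
    have "t > 0" using \<open>e > 0\<close> \<open>q \<noteq> 0\<close> by (simp add: t_def)
    have "dist q ((1 + t) *\<^sub>R q) = t * norm q"
      using \<open>t > 0\<close> by (simp add: dist_norm algebra_simps)
    also have "\<dots> < e" using \<open>e > 0\<close> \<open>q \<noteq> 0\<close> by (simp add: t_def)
    finally have "N ((1 + t) *\<^sub>R q) \<le> 1" using ball by (auto simp: unit_ball_def)
    then show False using \<open>t > 0\<close> assms by (simp add: N_scaleR)
  qed
  moreover have "q \<in> closure (unit_ball N)"
    using assms closure_subset by (fastforce simp: unit_ball_def)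
  ultimately show ?thesis by (simp add: frontier_def)
qed

lemma ray_lower_bound_cone:
  assumes ray: "\<forall>s>0. N p + s * D \<le> N (p + s *\<^sub>R d)" and "0 \<le> b"
  shows "a * N p + b * D \<le> N (a *\<^sub>R p + b *\<^sub>R d)"
proof (cases "b = 0")
  case True
  then show ?thesis using N_nonneg[of p] by (simp add: N_scaleR mult_right_mono)
next
  case False
  define c where "c = \<bar>a\<bar> + 1"
  have "a + c > 0" by (simp add: c_def)
  have "b / (a + c) > 0" using \<open>a + c > 0\<close> \<open>0 \<le> b\<close> False by simp
  then have "N p + (b / (a + c)) * D \<le> N (p + (b / (a + c)) *\<^sub>R d)" using ray by blast
  then have "(a + c) * (N p + (b / (a + c)) * D) \<le> (a + c) * N (p + (b / (a + c)) *\<^sub>R d)"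
    using \<open>a + c > 0\<close> by (simp add: mult_left_mono)
  also have "\<dots> = N ((a + c) *\<^sub>R (p + (b / (a + c)) *\<^sub>R d))"
    using \<open>a + c > 0\<close> by (simp add: N_scaleR)
  also have "\<dots> = N ((a *\<^sub>R p + b *\<^sub>R d) + c *\<^sub>R p)"
    using \<open>a + c > 0\<close> by (simp add: scaleR_add_right scaleR_add_left add_ac)
  also have "\<dots> \<le> N (a *\<^sub>R p + b *\<^sub>R d) + c * N p"
    using N_triangle[of "a *\<^sub>R p + b *\<^sub>R d" "c *\<^sub>R p"] by (simp add: N_scaleR c_def)
  finally have "(a + c) * N p + b * D \<le> N (a *\<^sub>R p + b *\<^sub>R d) + c * N p"
    using \<open>a + c > 0\<close> by (simp add: distrib_left)
  then show ?thesis by (simp add: algebra_simps)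
qed

text \<open>The witness is \<open>u\<close> tilted along \<open>perp p\<close>, which keeps its value at \<open>p\<close>.\<close>
lemma norming_tilt:
  assumes u: "norming N u p" and indep: "p \<bullet> perp d \<noteq> 0" and "u \<bullet> d \<le> D"
    and ray: "\<forall>s>0. N p + s * D \<le> N (p + s *\<^sub>R d)"
  shows "\<exists>u'. norming N u' p \<and> u' \<bullet> d = D"
proof -
  define u' where "u' = u + ((D - u \<bullet> d) / (perp p \<bullet> d)) *\<^sub>R perp p"
  have "perp p \<bullet> d \<noteq> 0" using indep by (simp add: inner_perp_left)
  then have u'd: "u' \<bullet> d = D" by (simp add: u'_def inner_add_left)
  have u'p: "u' \<bullet> p = N p" using u by (simp add: u'_def inner_add_left norming_def)
  have "u' \<bullet> x \<le> N x" for x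
  proof -
    define a b where "a = (x \<bullet> perp d) / (p \<bullet> perp d)" and "b = - (x \<bullet> perp p) / (p \<bullet> perp d)"
    have "x = (1 / (p \<bullet> perp d)) *\<^sub>R ((p \<bullet> perp d) *\<^sub>R x)" using indep by simp
    also have "\<dots> = a *\<^sub>R p + b *\<^sub>R d"
      by (subst cramer_perp) (simp add: a_def b_def scaleR_diff_right)
    finally have x: "x = a *\<^sub>R p + b *\<^sub>R d" .
    have u'x: "u' \<bullet> x = a * N p + b * D" by (simp add: x inner_add_right u'p u'd)
    show ?thesis
    proof (cases "0 \<le> b")
      case True
      then show ?thesis using ray_lower_bound_cone[OF ray True, of a] x u'x by metis
    next
      case False
      then have "b * D \<le> b * (u \<bullet> d)" using \<open>u \<bullet> d \<le> D\<close> by (simp add: mult_left_mono_neg)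
      moreover have "u \<bullet> x = a * N p + b * (u \<bullet> d)"
        using u by (simp add: x inner_add_right norming_def)
      moreover have "u \<bullet> x \<le> N x" using u by (simp add: norming_def)
      ultimately show ?thesis using u'x by linarith
    qed
  qed
  then show ?thesis using u'p u'd by (auto simp: norming_def)
qed

text \<open>Obtained by expanding \<open>N (perp \<psi>) *\<^sub>R w\<close> in the basis \<open>perp \<psi>, perp \<phi>\<close> and applying \<open>u\<close>.\<close>
lemma norming_perp_inequality:
  assumes \<phi>: "norming N \<phi> (perp \<psi>)" and u: "norming N u w"
  shows "N (perp \<psi>) * N w + (\<psi> \<bullet> w) * (u \<bullet> perp \<phi>) \<le> N (perp \<psi>) * \<bar>\<phi> \<bullet> w\<bar>"
proof -
  have decomp: "N (perp \<psi>) *\<^sub>R w = (\<phi> \<bullet> w) *\<^sub>R perp \<psi> - (\<psi> \<bullet> w) *\<^sub>R perp \<phi>"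
    using cramer_perp[of "perp \<psi>" "perp \<phi>" w] \<phi>
    by (simp add: norming_def inner_commute algebra_simps)
  have "N (perp \<psi>) * N w = u \<bullet> (N (perp \<psi>) *\<^sub>R w)" using u by (simp add: norming_def)
  also have "\<dots> = (\<phi> \<bullet> w) * (u \<bullet> perp \<psi>) - (\<psi> \<bullet> w) * (u \<bullet> perp \<phi>)"
    by (simp only: decomp inner_diff_right inner_scaleR_right)
  finally have "N (perp \<psi>) * N w = (\<phi> \<bullet> w) * (u \<bullet> perp \<psi>) - (\<psi> \<bullet> w) * (u \<bullet> perp \<phi>)" .
  moreover have "(\<phi> \<bullet> w) * (u \<bullet> perp \<psi>) \<le> \<bar>\<phi> \<bullet> w\<bar> * N (perp \<psi>)"
    using abs_inner_le_N[of u "perp \<psi>"] u unfolding norming_def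
    by (metis abs_ge_self abs_mult abs_ge_zero mult_left_mono order_trans)
  ultimately show ?thesis by (simp add: mult.commute)
qed

lemma double_cluster_of_norming_signs:
  assumes "finite A" and \<phi>: "norming N \<phi> v" "v \<noteq> 0"
    and U: "\<forall>a\<in>A. norming N (U a) (z - a)" and signs: "\<forall>a\<in>A. U a = \<phi> \<or> U a = - \<phi>"
    and sum: "(\<Sum>a\<in>A. U a) = 0"
  shows "double_cluster N A"
proof -
  define P where "P = {a\<in>A. U a = \<phi>}"
  define M where "M = {a\<in>A. U a = - \<phi>}"
  have "0 < \<phi> \<bullet> v" using \<phi> N_pos[of v] by (simp add: norming_def)
  then have "\<phi> \<noteq> 0" by auto
  have "\<phi> \<noteq> - \<phi>"
  proof
    assume "\<phi> = - \<phi>"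
    then have "\<phi> \<bullet> v = - (\<phi> \<bullet> v)" by (metis inner_minus_left)
    with \<open>0 < \<phi> \<bullet> v\<close> show False by linarith
  qed
  then have disj: "P \<inter> M = {}" by (auto simp: P_def M_def)
  have A: "A = M \<union> P" using signs by (auto simp: P_def M_def)
  have fin: "finite P" "finite M" using \<open>finite A\<close> by (auto simp: P_def M_def)
  have "0 = (\<Sum>a\<in>P. U a) + (\<Sum>a\<in>M. U a)"
    using sum sum.union_disjoint[OF fin disj, of U] A by (simp add: Un_commute)
  also have "\<dots> = (\<Sum>a\<in>P. \<phi>) + (\<Sum>a\<in>M. - \<phi>)"
    by (intro arg_cong2[where f = "(+)"] sum.cong) (auto simp: P_def M_def)
  also have "\<dots> = (real (card P) - real (card M)) *\<^sub>R \<phi>"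
    by (simp add: sum_negf scaleR_diff_left sum_constant_scaleR del: sum_constant)
  finally have "card P = card M" using \<open>\<phi> \<noteq> 0\<close> by simp
  moreover have "(1 / N (a - b)) *\<^sub>R (a - b) \<in> unit_ball N \<inter> {x. \<phi> \<bullet> x = 1}"
    if "a \<in> M" "b \<in> P" for a b
  proof -
    have "norming N (- \<phi>) (z - a)" "norming N \<phi> (z - b)"
      using U that by (auto simp: P_def M_def)
    then have "\<phi> \<bullet> (a - z) = N (a - z)" "\<phi> \<bullet> (z - b) = N (z - b)"
      by (auto simp: norming_def N_commute[of a z] inner_diff_right)
    then have "\<phi> \<bullet> ((a - z) + (z - b)) = N ((a - z) + (z - b))"
      using \<phi> by (intro norming_add) (auto simp: norming_def)
    then have "norming N \<phi> (a - b)" using \<phi> by (simp add: norming_def)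
    moreover have "a \<noteq> b" using that disj by auto
    ultimately show ?thesis by (metis norming_normalized right_minus_eq)
  qed
  ultimately show ?thesis
    unfolding A using fin disj norming_exposed_face[OF \<phi>] by (intro double_cluster_of_pairing)
qed

end

locale smooth_minkowski_plane = minkowski_plane +
  assumes smooth: "smooth_plane N"
begin

lemma norming_unique:
  assumes "p \<noteq> 0" and u: "norming N u p" and v: "norming N v p"
  shows "u = v"
proof -
  let ?q = "(1 / N p) *\<^sub>R p"
  have "?q \<in> frontier (unit_ball N)"
    using N_normalize[OF assms(1)] by (rule mem_frontier_unit_ball)
  then have "\<exists>!L. supporting_line N L \<and> ?q \<in> L" using smooth by (simp add: smooth_plane_def)
  then have unique: "L = L'" if "supporting_line N L" "?q \<in> L" "supporting_line N L'" "?q \<in> L'"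
    for L L' using that by blast
  have "supporting_line N {x. u \<bullet> x = 1}" "?q \<in> {x. u \<bullet> x = 1}"
    using norming_supporting_line[OF u assms(1)] norming_normalized[OF u assms(1)] by auto
  moreover have "supporting_line N {x. v \<bullet> x = 1}" "?q \<in> {x. v \<bullet> x = 1}"
    using norming_supporting_line[OF v assms(1)] norming_normalized[OF v assms(1)] by auto
  ultimately have "{x. u \<bullet> x = 1} = {x. v \<bullet> x = 1}" by (rule unique)
  moreover have "u \<bullet> ?q = 1" using \<open>?q \<in> {x. u \<bullet> x = 1}\<close> by (rule CollectD)
  ultimately show ?thesis by (rule hyperplane_eq_imp_eq)
qed

lemma norming_exists:
  assumes "p \<noteq> 0"
  obtains u where "norming N u p"
proof -
  let ?q = "(1 / N p) *\<^sub>R p"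
  obtain L where "supporting_line N L" "?q \<in> L"
    using mem_frontier_unit_ball[OF N_normalize[OF assms]] smooth
    by (auto simp: smooth_plane_def)
  then obtain u c where "u \<noteq> 0" and ball: "\<forall>x\<in>unit_ball N. u \<bullet> x \<le> c" and "u \<bullet> ?q = c"
    unfolding supporting_line_def by auto
  have bound: "u \<bullet> x \<le> c * N x" for x
  proof (cases "x = 0")
    case False
    have "(1 / N x) *\<^sub>R x \<in> unit_ball N" using N_normalize[OF False] by (simp add: unit_ball_def)
    then have "u \<bullet> ((1 / N x) *\<^sub>R x) \<le> c" using ball by blast
    then show ?thesis using N_pos[OF False] by (simp add: field_simps)
  qed simp
  have "0 < u \<bullet> u" using \<open>u \<noteq> 0\<close> by simp
  also have "\<dots> \<le> c * N u" by (rule bound)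
  finally have "c > 0" using N_nonneg[of u] by (simp add: zero_less_mult_iff)
  have "norming N ((1 / c) *\<^sub>R u) p"
    unfolding norming_def using bound \<open>u \<bullet> ?q = c\<close> \<open>c > 0\<close> N_pos[OF assms]
    by (auto simp: field_simps)
  then show ?thesis by (rule that)
qed

lemma norming_eq_pm:
  assumes "w \<noteq> 0" and "\<forall>x. \<phi> \<bullet> x \<le> N x" and "N w \<le> \<bar>\<phi> \<bullet> w\<bar>" and "norming N u w"
  shows "u = \<phi> \<or> u = - \<phi>"
  using norming_abs_inner[OF assms(2,3)] norming_unique[OF assms(1) assms(4)] by metis

text \<open>The right derivative of \<open>N\<close> at \<open>p\<close> in direction \<open>d\<close> is \<open>u \<bullet> d\<close>: a slope \<open>D > u \<bullet> d\<close>
  along the whole ray would, by \<open>norming_tilt\<close>, yield a second norming functional of \<open>p\<close>.\<close>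
lemma exists_chord_below_tangent:
  assumes "p \<noteq> 0" and u: "norming N u p" and "u \<bullet> d < D"
  shows "\<exists>s>0. N (p + s *\<^sub>R d) \<le> N p + s * D"
proof (cases "p \<bullet> perp d = 0")
  case True
  define l where "l = (p \<bullet> d) / (p \<bullet> p)"
  have "d = (1 / (p \<bullet> p)) *\<^sub>R ((p \<bullet> p) *\<^sub>R d)" using \<open>p \<noteq> 0\<close> by simp
  also have "\<dots> = l *\<^sub>R p" by (simp add: perp_orthogonal_imp_parallel[OF True] l_def)
  finally have d: "d = l *\<^sub>R p" .
  define s where "s = 1 / (\<bar>l\<bar> + 1)"
  have "s > 0" by (simp add: s_def add_pos_nonneg)
  have "s * \<bar>l\<bar> < 1" by (simp add: s_def field_simps)
  moreover have "- (s * \<bar>l\<bar>) \<le> s * l"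
    using mult_left_mono[of "- \<bar>l\<bar>" l s] \<open>s > 0\<close> by simp
  ultimately have "1 + s * l > 0" by linarith
  have "N (p + s *\<^sub>R d) = (1 + s * l) * N p"
    using \<open>1 + s * l > 0\<close> N_scaleR[of "1 + s * l" p] by (simp add: d algebra_simps)
  also have "\<dots> \<le> N p + s * D"
    using u \<open>u \<bullet> d < D\<close> \<open>s > 0\<close> by (simp add: d norming_def algebra_simps)
  finally show ?thesis using \<open>s > 0\<close> by blast
next
  case False
  show ?thesis
  proof (rule ccontr)
    assume "\<not> ?thesis"
    then have "\<forall>s>0. N p + s * D \<le> N (p + s *\<^sub>R d)" by (auto simp: not_le less_imp_le)
    then obtain u' where "norming N u' p" and "u' \<bullet> d = D"
      using norming_tilt[OF u False less_imp_le[OF \<open>u \<bullet> d < D\<close>]] by blast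
    then show False using norming_unique[OF \<open>p \<noteq> 0\<close> u] \<open>u \<bullet> d < D\<close> by blast
  qed
qed

lemma eventually_N_le_tangent:
  assumes "p \<noteq> 0" and "norming N u p" and "e > 0"
  shows "eventually (\<lambda>s. N (p + s *\<^sub>R d) \<le> N p + s * (u \<bullet> d + e)) (at_right 0)"
proof -
  obtain t where "t > 0" and t: "N (p + t *\<^sub>R d) \<le> N p + t * (u \<bullet> d + e)"
    using exists_chord_below_tangent[OF assms(1,2)] \<open>e > 0\<close> by (metis less_add_same_cancel1)
  have "eventually (\<lambda>s. s \<in> {0<..<t}) (at_right 0)"
    using \<open>t > 0\<close> by (intro eventually_at_right_real) simp
  then show ?thesis
    by (rule eventually_mono) (use N_convex_chord[of _ t p d "u \<bullet> d + e"] t in auto)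
qed

text \<open>First-order condition: moving \<open>z\<close> in direction \<open>- (\<Sum>a\<in>A. U a)\<close> would decrease the
  total distance.\<close>
lemma FT_norming_sum_eq_0:
  assumes "finite A" and "z \<in> FT N A" and "z \<notin> A"
    and U: "\<forall>a\<in>A. norming N (U a) (z - a)"
  shows "(\<Sum>a\<in>A. U a) = 0"
proof (rule ccontr)
  define P where "P = (\<Sum>a\<in>A. U a)"
  assume "(\<Sum>a\<in>A. U a) \<noteq> 0"
  then have "P \<bullet> P > 0" by (simp add: P_def)
  define e where "e = (P \<bullet> P) / (real (card A) + 1)"
  have "e > 0" using \<open>P \<bullet> P > 0\<close> by (simp add: e_def)
  have "\<forall>a\<in>A. eventually (\<lambda>s. N ((z - a) + s *\<^sub>R - P) \<le> N (z - a) + s * (U a \<bullet> - P + e))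
      (at_right 0)"
  proof
    fix a assume "a \<in> A"
    then have "z - a \<noteq> 0" using \<open>z \<notin> A\<close> by auto
    then show "eventually (\<lambda>s. N ((z - a) + s *\<^sub>R - P) \<le> N (z - a) + s * (U a \<bullet> - P + e))
        (at_right 0)"
      using U \<open>a \<in> A\<close> \<open>e > 0\<close> by (blast intro: eventually_N_le_tangent)
  qed
  then have "eventually (\<lambda>s. \<forall>a\<in>A. N ((z - a) + s *\<^sub>R - P) \<le> N (z - a) + s * (U a \<bullet> - P + e))
      (at_right 0)"
    by (rule eventually_ball_finite[OF \<open>finite A\<close>])
  moreover have "eventually (\<lambda>s. s > 0) (at_right (0::real))"
    by (simp add: eventually_at_right_less)
  ultimately obtain s where "s > 0"
    and s: "\<forall>a\<in>A. N ((z - a) + s *\<^sub>R - P) \<le> N (z - a) + s * (U a \<bullet> - P + e)"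
    using eventually_happens'[OF trivial_limit_at_right_real eventually_conj] by blast
  have "(\<Sum>a\<in>A. N (z - a)) \<le> (\<Sum>a\<in>A. N ((z - s *\<^sub>R P) - a))"
    using \<open>z \<in> FT N A\<close> by (simp add: FT_def)
  also have "\<dots> \<le> (\<Sum>a\<in>A. N (z - a) + s * (U a \<bullet> - P + e))"
    using s by (intro sum_mono) (simp add: algebra_simps)
  also have "\<dots> = (\<Sum>a\<in>A. N (z - a)) + s * (real (card A) * e - (\<Sum>a\<in>A. U a) \<bullet> P)"
    by (simp add: sum.distrib sum_subtractf inner_sum_left sum_distrib_left algebra_simps)
  also have "\<dots> = (\<Sum>a\<in>A. N (z - a)) + s * (real (card A) * e - P \<bullet> P)"
    by (simp add: P_def)
  finally have "P \<bullet> P \<le> real (card A) * e"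
    using \<open>s > 0\<close> by (simp add: zero_le_mult_iff)
  moreover have "real (card A) * e < P \<bullet> P"
    using \<open>P \<bullet> P > 0\<close> by (simp add: e_def field_simps)
  ultimately show False by simp
qed

lemma norming_in_half_plane:
  assumes "\<psi> \<noteq> 0" and \<phi>: "norming N \<phi> (perp \<psi>)" and "w \<noteq> 0" and "0 \<le> \<psi> \<bullet> w"
    and u: "norming N u w"
  shows "u \<bullet> perp \<phi> < 0 \<or> u = \<phi> \<or> u = - \<phi>"
proof (cases "N w \<le> \<bar>\<phi> \<bullet> w\<bar>")
  case True
  then show ?thesis using norming_eq_pm[OF \<open>w \<noteq> 0\<close> _ _ u] \<phi> by (simp add: norming_def)
next
  case False
  have "0 < N (perp \<psi>)" using \<open>\<psi> \<noteq> 0\<close> by (simp add: N_pos)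
  with False have "N (perp \<psi>) * \<bar>\<phi> \<bullet> w\<bar> < N (perp \<psi>) * N w" by simp
  then have "(\<psi> \<bullet> w) * (u \<bullet> perp \<phi>) < 0" using norming_perp_inequality[OF \<phi> u] by linarith
  then show ?thesis using \<open>0 \<le> \<psi> \<bullet> w\<close> by (simp add: mult_less_0_iff)
qed

lemma norming_sum_zero_half_plane:
  assumes "finite A" and "\<psi> \<noteq> 0"
    and w: "\<forall>a\<in>A. w a \<noteq> 0 \<and> 0 \<le> \<psi> \<bullet> w a" and U: "\<forall>a\<in>A. norming N (U a) (w a)"
    and sum: "(\<Sum>a\<in>A. U a) = 0"
  obtains \<phi> v where "v \<noteq> 0" "norming N \<phi> v" "\<forall>a\<in>A. U a = \<phi> \<or> U a = - \<phi>"
proof -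
  have "perp \<psi> \<noteq> 0" using \<open>\<psi> \<noteq> 0\<close> by simp
  then obtain \<phi> where \<phi>: "norming N \<phi> (perp \<psi>)" by (rule norming_exists)
  have cases: "U a \<bullet> perp \<phi> < 0 \<or> U a = \<phi> \<or> U a = - \<phi>" if "a \<in> A" for a
    using norming_in_half_plane[OF \<open>\<psi> \<noteq> 0\<close> \<phi>] w U that by blast
  then have "\<forall>a\<in>A. 0 \<le> - (U a \<bullet> perp \<phi>)" by fastforce
  moreover have "(\<Sum>a\<in>A. - (U a \<bullet> perp \<phi>)) = 0"
    using sum by (simp add: sum_negf inner_sum_left[symmetric])
  ultimately have "\<forall>a\<in>A. U a \<bullet> perp \<phi> = 0"
    using sum_nonneg_eq_0_iff[OF \<open>finite A\<close>, of "\<lambda>a. - (U a \<bullet> perp \<phi>)"] by simp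
  then show ?thesis using that[OF \<open>perp \<psi> \<noteq> 0\<close> \<phi>] cases by fastforce
qed

end

theorem corollary4p9:
  fixes N :: "real^2 \<Rightarrow> real" and A :: "(real^2) set"
  assumes "is_norm N" and "smooth_plane N" and "finite A"
    and "\<not> double_cluster N A" and "\<not> pseudo_double_cluster N A"
  shows "FT N A \<subseteq> A \<union> interior (convex hull A)"
proof
  interpret smooth_minkowski_plane N
    using assms(1,2) by unfold_locales
  fix z assume "z \<in> FT N A"
  show "z \<in> A \<union> interior (convex hull A)"
  proof (rule ccontr)
    assume "z \<notin> A \<union> interior (convex hull A)"
    then have "z \<notin> A" and "z \<notin> interior (convex hull A)" by auto
    then obtain \<psi> where "\<psi> \<noteq> 0" and "\<And>x. x \<in> convex hull A \<Longrightarrow> \<psi> \<bullet> x \<le> \<psi> \<bullet> z"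
      using exists_halfspace_le_not_interior[OF convex_convex_hull] by metis
    then have \<psi>: "\<forall>a\<in>A. \<psi> \<bullet> a \<le> \<psi> \<bullet> z" by (simp add: hull_inc)
    define U where "U a = (SOME u. norming N u (z - a))" for a
    have U: "\<forall>a\<in>A. norming N (U a) (z - a)"
      using norming_exists \<open>z \<notin> A\<close> unfolding U_def by (metis right_minus_eq someI)
    have sum: "(\<Sum>a\<in>A. U a) = 0"
      using FT_norming_sum_eq_0[OF assms(3) \<open>z \<in> FT N A\<close> \<open>z \<notin> A\<close> U] .
    have "\<forall>a\<in>A. z - a \<noteq> 0 \<and> 0 \<le> \<psi> \<bullet> (z - a)"
      using \<psi> \<open>z \<notin> A\<close> by (auto simp: inner_diff_right)
    then obtain \<phi> v where "v \<noteq> 0" "norming N \<phi> v" and signs: "\<forall>a\<in>A. U a = \<phi> \<or> U a = - \<phi>"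
      using norming_sum_zero_half_plane[OF assms(3) \<open>\<psi> \<noteq> 0\<close> _ U sum] by blast
    then have "double_cluster N A"
      by (intro double_cluster_of_norming_signs[OF assms(3) \<open>norming N \<phi> v\<close> \<open>v \<noteq> 0\<close> U signs sum])
    then show False using assms(4) by blast
  qed
qed

end
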